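(* Consider the uncertain control affine system \[ \dot x = f(x) + g(x)u + \varphi(x,u)\theta,\qquad \varphi(x,u)=[F(x)\;\; G(x)\,\mathrm{diag}(u)]\in\mathbb{R}^{n\times(p+m)}, \] with state $x\in\mathbb{R}^n$, input $u\in\mathcal{U}\subseteq\mathbb{R}^m$, known locally Lipschitz $f:\mathbb{R}^n\to\mathbb{R}^n$, $g:\mathbb{R}^n\to\mathbb{R}^{n\times m}$, known matrix-valued functions $F:\mathbb{R}^n\to\mathbb{R}^{n\times p}$, $G:\mathbb{R}^n\to\mathbb{R}^{n\times m}$, and unknown $\theta\in\mathbb{R}^{p+m}$. Assume $\theta\in\Theta:=[\underline{\theta}_1,\overline{\theta}_1]\times\cdots\times[\underline{\theta}_{p+m},\overline{\theta}_{p+m}]$ for known constants, and write $\Theta=\{\theta\in\mathbb{R}^{p+m}: A\theta\le b\}$ with $A\in\mathbb{R}^{2(p+m)\times(p+m)}$, $b\in\mathbb{R}^{2(p+m)}$ its halfspace representation. Let $h:\mathbb{R}^n\to\mathbb{R}$ be continuously differentiable, $\mathcal{C}=\{x: h(x)\ge0\}$, and suppose there is an extended class $\mathcal{K}$ function $\alpha$ with \[ \sup_{u\in\mathcal{U}}\inf_{\theta\in\Theta}\big(L_fh(x)+L_gh(x)u+L_\varphi h(x,u)\theta\big)\ge -\alpha(h(x))\quad\forall x\in\mathcal{C}, \] and that for each $x\in\mathcal{C}$ the set $K_{rcbf}(x)=\{u\in\mathcal{U}\mid L_fh(x)+L_gh(x)u+\inf_{\theta\in\Theta}L_\varphi h(x,u)\theta\ge-\alpha(h(x))\}$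 is nonempty. Let $k_d:\mathbb{R}^n\to\mathbb{R}^m$ be a locally Lipschitz nominal policy and, for each $x$, consider the quadratic program in the decision variables $u\in\mathcal{U}$ and $\mu\in\mathbb{R}^{2(p+m)}$: \[ \min_{u\in\mathcal{U},\,\mu\le 0}\ \tfrac12\|u-k_d(x)\|^2\quad\text{s.t.}\quad L_fh(x)+L_gh(x)u+b^\top\mu\ge-\alpha(h(x)),\qquad \mu^\top A=L_\varphi h(x,u). \] Then any locally Lipschitz policy $u=k(x)$ given by (the $u$-component of) a solution of this program renders $\mathcal{C}$ forward invariant for the closed-loop system $\dot x=f(x)+g(x)k(x)+\varphi(x,k(x))\theta$.
   Context: $L_fh(x)=\nabla h(x)f(x)$, $L_gh(x)=\nabla h(x)g(x)$, $L_\varphi h(x,u)=\nabla h(x)\varphi(x,u)\in\mathbb{R}^{1\times(p+m)}$ (affine in $u$). $\mu\le0$ is componentwise. An extended class $\mathcal{K}$ function is a continuous strictly increasing $\alpha:\mathbb{R}\to\mathbb{R}$ with $\alpha(0)=0$. $\mathrm{diag}(u)$ is the diagonal matrix with the entries of $u$ on its diagonal. A closed set $\mathcal{C}$ is forward invariant if every closed-loop solution starting in $\mathcal{C}$ stays in $\mathcal{C}$ on its maximal interval of existence. *)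

theory Defs
  imports "HOL-Analysis.Analysis"
begin

definition locally_lipschitz :: "('a::metric_space \<Rightarrow> 'b::metric_space) \<Rightarrow> bool" where
  "locally_lipschitz f \<longleftrightarrow> (\<forall>x. \<exists>e>0. \<exists>L. L-lipschitz_on (ball x e) f)"

definition ext_class_K :: "(real \<Rightarrow> real) \<Rightarrow> bool" where
  "ext_class_K \<alpha> \<longleftrightarrow> continuous_on UNIV \<alpha> \<and> strict_mono \<alpha> \<and> \<alpha> 0 = 0"

text \<open>The regressor phi(x,u) = [F(x)  G(x) diag(u)], columns indexed by 'p + 'm.\<close>
definition regressor ::
  "(real^'n::finite \<Rightarrow> real^'p::finite^'n) \<Rightarrow> (real^'n \<Rightarrow> real^'m::finite^'n) \<Rightarrow> real^'n \<Rightarrow> real^'m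
     \<Rightarrow> real^('p + 'm)^'n" where
  "regressor F G x u = (\<chi> i j. case j of Inl k \<Rightarrow> F x $ i $ k | Inr k \<Rightarrow> G x $ i $ k * u $ k)"

text \<open>Lie derivatives, with grad h(x) represented as a vector gradh x.\<close>
definition Lf :: "(real^'n::finite \<Rightarrow> real^'n) \<Rightarrow> (real^'n \<Rightarrow> real^'n) \<Rightarrow> real^'n \<Rightarrow> real" where
  "Lf gradh f x = gradh x \<bullet> f x"

definition Lg :: "(real^'n::finite \<Rightarrow> real^'n) \<Rightarrow> (real^'n \<Rightarrow> real^'m::finite^'n) \<Rightarrow> real^'n \<Rightarrow> real^'m" where
  "Lg gradh g x = gradh x v* g x"

definition Lphi ::
  "(real^'n::finite \<Rightarrow> real^'n) \<Rightarrow> (real^'n \<Rightarrow> real^'p::finite^'n) \<Rightarrow> (real^'n \<Rightarrow> real^'m::finite^'n)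
     \<Rightarrow> real^'n \<Rightarrow> real^'m \<Rightarrow> real^('p + 'm)" where
  "Lphi gradh F G x u = gradh x v* regressor F G x u"

definition qp_feasible ::
  "(real^'m::finite) set \<Rightarrow> real^('p::finite + 'm)^'r::finite \<Rightarrow> real^'r \<Rightarrow> (real^'n::finite \<Rightarrow> real)
    \<Rightarrow> (real^'n \<Rightarrow> real^'n) \<Rightarrow> (real \<Rightarrow> real) \<Rightarrow> (real^'n \<Rightarrow> real^'n) \<Rightarrow> (real^'n \<Rightarrow> real^'m^'n)
    \<Rightarrow> (real^'n \<Rightarrow> real^'p^'n) \<Rightarrow> (real^'n \<Rightarrow> real^'m^'n) \<Rightarrow> real^'n \<Rightarrow> real^'m \<Rightarrow> real^'r \<Rightarrow> bool" where
  "qp_feasible U A b h gradh \<alpha> f g F G x u \<mu> \<longleftrightarrow>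
     u \<in> U \<and> (\<forall>i. \<mu> $ i \<le> 0) \<and>
     Lf gradh f x + Lg gradh g x \<bullet> u + b \<bullet> \<mu> \<ge> - \<alpha> (h x) \<and>
     \<mu> v* A = Lphi gradh F G x u"

definition qp_solution ::
  "(real^'m::finite) set \<Rightarrow> real^('p::finite + 'm)^'r::finite \<Rightarrow> real^'r \<Rightarrow> (real^'n::finite \<Rightarrow> real)
    \<Rightarrow> (real^'n \<Rightarrow> real^'n) \<Rightarrow> (real \<Rightarrow> real) \<Rightarrow> (real^'n \<Rightarrow> real^'n) \<Rightarrow> (real^'n \<Rightarrow> real^'m^'n)
    \<Rightarrow> (real^'n \<Rightarrow> real^'p^'n) \<Rightarrow> (real^'n \<Rightarrow> real^'m^'n) \<Rightarrow> (real^'n \<Rightarrow> real^'m)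
    \<Rightarrow> real^'n \<Rightarrow> real^'m \<Rightarrow> real^'r \<Rightarrow> bool" where
  "qp_solution U A b h gradh \<alpha> f g F G kd x u \<mu> \<longleftrightarrow>
     qp_feasible U A b h gradh \<alpha> f g F G x u \<mu> \<and>
     (\<forall>u' \<mu>'. qp_feasible U A b h gradh \<alpha> f g F G x u' \<mu>' \<longrightarrow>
        (1/2) * (norm (u - kd x))\<^sup>2 \<le> (1/2) * (norm (u' - kd x))\<^sup>2)"

definition forward_invariant :: "(real^'n::finite \<Rightarrow> real^'n) \<Rightarrow> (real^'n) set \<Rightarrow> bool" where
  "forward_invariant V S \<longleftrightarrow>
     (\<forall>(x::real \<Rightarrow> real^'n) t0 T. t0 \<le> T \<longrightarrow>
        (\<forall>t\<in>{t0..T}. (x has_vector_derivative V (x t)) (at t within {t0..T})) \<longrightarrow>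
        x t0 \<in> S \<longrightarrow> (\<forall>t\<in>{t0..T}. x t \<in> S))"

end

theory Submission
  imports Defs
begin

text \<open>The QP's equality constraint makes \<open>\<mu> \<le> 0\<close> a dual certificate: for every \<open>\<theta>\<close> with
  \<open>A \<theta> \<le> b\<close>, weak duality gives \<open>b\<^sup>T \<mu> \<le> \<mu>\<^sup>T A \<theta> = L\<^sub>\<phi>h(x,u) \<theta>\<close>. Hence the \<open>u\<close>-part of any
  feasible point satisfies \<open>h' \<ge> -\<alpha>(h)\<close> for the true parameter, at every state. Along a
  closed-loop solution \<open>y = h \<circ> x\<close> then increases whenever it is negative, so it cannot
  leave \<open>[0,\<infinity>)\<close>.\<close>

lemma nonneg_if_deriv_pos_when_neg:
  fixes y y' :: "real \<Rightarrow> real"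
  assumes der: "\<And>t. t \<in> {t0..T} \<Longrightarrow> (y has_real_derivative y' t) (at t within {t0..T})"
    and pos: "\<And>t. t \<in> {t0..T} \<Longrightarrow> y t < 0 \<Longrightarrow> y' t > 0"
    and y0: "y t0 \<ge> 0"
    and t1: "t1 \<in> {t0..T}"
  shows "y t1 \<ge> 0"
proof (rule ccontr)
  assume neg: "\<not> y t1 \<ge> 0"
  have sub1: "{t0..t1} \<subseteq> {t0..T}"
    using t1 by auto
  have "continuous_on {t0..T} y"
    using der DERIV_continuous continuous_on_eq_continuous_within by blast
  then have "continuous_on {t0..t1} y"
    using sub1 continuous_on_subset by blast
  then have "closed ({t0..t1} \<inter> y -` {0..})"
    by (rule continuous_closed_preimage) auto
  then have "compact ({t0..t1} \<inter> y -` {0..})"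
    by (simp add: compact_eq_bounded_closed bounded_Int)
  moreover have "{t0..t1} \<inter> y -` {0..} \<noteq> {}"
    using y0 t1 by auto
  ultimately obtain s where "s \<in> {t0..t1} \<inter> y -` {0..}"
    and last: "\<forall>t \<in> {t0..t1} \<inter> y -` {0..}. t \<le> s"
    by (rule compact_attains_sup[elim_format]) blast
  then have s: "t0 \<le> s" "s \<le> t1" "y s \<ge> 0"
    by auto
  have "s < t1"
    using s neg by (cases "s = t1") auto
  have sub: "{s..t1} \<subseteq> {t0..T}"
    using s t1 by auto
  have "\<exists>\<xi>\<in>{s<..<t1}. y t1 - y s = (t1 - s) * y' \<xi>"
  proof (rule mvt_simple[OF \<open>s < t1\<close>])
    fix \<xi> assume "s \<le> \<xi>" "\<xi> \<le> t1"
    then have "(y has_real_derivative y' \<xi>) (at \<xi> within {s..t1})"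
      using has_field_derivative_subset[OF der sub] sub by auto
    then show "(y has_derivative (\<lambda>d. d * y' \<xi>)) (at \<xi> within {s..t1})"
      by (simp add: has_field_derivative_def mult.commute[of _ "y' \<xi>"])
  qed
  then obtain \<xi> where \<xi>: "s < \<xi>" "\<xi> < t1" and mvt: "y t1 - y s = (t1 - s) * y' \<xi>"
    by auto
  have "\<xi> \<notin> {t0..t1} \<inter> y -` {0..}"
    using last \<xi>(1) by force
  then have "y \<xi> < 0"
    using \<xi> s by auto
  then have "y' \<xi> > 0"
    using pos \<xi> sub by auto
  then have "y t1 - y s > 0"
    unfolding mvt using \<open>s < t1\<close> by simp
  then show False
    using s(3) neg by linarith
qed

lemma inner_gradient_chain_rule:
  assumes "(x has_vector_derivative x') (at t within S)"
    and "(h has_derivative (\<lambda>v. D \<bullet> v)) (at (x t))"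
  shows "((h \<circ> x) has_real_derivative D \<bullet> x') (at t within S)"
  using vector_derivative_diff_chain_within[OF assms(1) has_derivative_at_withinI[OF assms(2)]]
  by (simp add: has_real_derivative_iff_has_vector_derivative)

theorem forward_invariant_superlevel_set:
  fixes V :: "real^'n::finite \<Rightarrow> real^'n" and h :: "real^'n \<Rightarrow> real"
  assumes h_deriv: "\<And>x. (h has_derivative (\<lambda>v. gradh x \<bullet> v)) (at x)"
    and "strict_mono \<alpha>" "\<alpha> 0 = 0"
    and cbf: "\<And>x. gradh x \<bullet> V x \<ge> - \<alpha> (h x)"
  shows "forward_invariant V {x. h x \<ge> 0}"
  unfolding forward_invariant_def
proof (intro allI impI ballI)
  fix x :: "real \<Rightarrow> real^'n" and t0 T t
  assume der: "\<forall>t\<in>{t0..T}. (x has_vector_derivative V (x t)) (at t within {t0..T})"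
    and x0: "x t0 \<in> {x. h x \<ge> 0}" and t: "t \<in> {t0..T}"
  have "(h \<circ> x) t \<ge> 0"
  proof (rule nonneg_if_deriv_pos_when_neg[where y = "h \<circ> x" and y' = "\<lambda>s. gradh (x s) \<bullet> V (x s)"])
    show "((h \<circ> x) has_real_derivative gradh (x s) \<bullet> V (x s)) (at s within {t0..T})"
      if "s \<in> {t0..T}" for s
      by (rule inner_gradient_chain_rule[OF der[rule_format, OF that] h_deriv])
    show "gradh (x s) \<bullet> V (x s) > 0" if "s \<in> {t0..T}" "(h \<circ> x) s < 0" for s
    proof -
      have "\<alpha> (h (x s)) < 0"
        using strict_monoD[OF \<open>strict_mono \<alpha>\<close>, of "h (x s)" 0] \<open>\<alpha> 0 = 0\<close> that(2) by simp
      then show ?thesis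
        using cbf[of "x s"] by linarith
    qed
  qed (use x0 t in auto)
  then show "x t \<in> {x. h x \<ge> 0}"
    by simp
qed

lemma inner_le_inner_vector_matrix_of_nonpos:
  fixes A :: "real^'k::finite^'r::finite"
  assumes "\<forall>i. \<mu> $ i \<le> 0" and "\<forall>i. (A *v \<theta>) $ i \<le> b $ i"
  shows "b \<bullet> \<mu> \<le> (\<mu> v* A) \<bullet> \<theta>"
proof -
  have "b \<bullet> \<mu> \<le> \<mu> \<bullet> (A *v \<theta>)"
    unfolding inner_vec_def
    using assms by (intro sum_mono) (simp add: mult.commute mult_left_mono_neg)
  then show ?thesis
    by (simp add: dot_lmul_matrix)
qed

lemma inner_gradient_closed_loop:
  "gradh x \<bullet> (f x + g x *v u + regressor F G x u *v \<theta>)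
     = Lf gradh f x + Lg gradh g x \<bullet> u + Lphi gradh F G x u \<bullet> \<theta>"
  unfolding Lf_def Lg_def Lphi_def by (simp add: inner_add_right dot_lmul_matrix)

lemma qp_feasible_imp_cbf_condition:
  assumes "qp_feasible U A b h gradh \<alpha> f g F G x u \<mu>"
    and "\<forall>i. (A *v \<theta>) $ i \<le> b $ i"
  shows "gradh x \<bullet> (f x + g x *v u + regressor F G x u *v \<theta>) \<ge> - \<alpha> (h x)"
  using assms inner_le_inner_vector_matrix_of_nonpos[of \<mu> A \<theta> b]
  unfolding inner_gradient_closed_loop qp_feasible_def by force

theorem theorem1:
  fixes f :: "real^'n::finite \<Rightarrow> real^'n"
    and g :: "real^'n \<Rightarrow> real^'m::finite^'n"
    and F :: "real^'n \<Rightarrow> real^'p::finite^'n"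
    and G :: "real^'n \<Rightarrow> real^'m^'n"
    and U :: "(real^'m) set"
    and \<theta> lo hi :: "real^('p + 'm)"
    and A :: "real^('p + 'm)^'r::finite"
    and b :: "real^'r"
    and h :: "real^'n \<Rightarrow> real"
    and gradh :: "real^'n \<Rightarrow> real^'n"
    and \<alpha> :: "real \<Rightarrow> real"
    and kd k :: "real^'n \<Rightarrow> real^'m"
  defines "\<Theta> \<equiv> {th::real^('p + 'm). \<forall>i. lo $ i \<le> th $ i \<and> th $ i \<le> hi $ i}"
    and "C \<equiv> {x. h x \<ge> 0}"
  assumes f_lip: "locally_lipschitz f"
    and g_lip: "locally_lipschitz g"
    and theta_in: "\<theta> \<in> \<Theta>"
    and A_dim: "CARD('r) = 2 * CARD('p + 'm)"
    and halfspace: "{th. \<forall>i. (A *v th) $ i \<le> b $ i} = \<Theta>"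
    and h_deriv: "\<And>x. (h has_derivative (\<lambda>v. gradh x \<bullet> v)) (at x)"
    and h_C1: "continuous_on UNIV gradh"
    and alpha_K: "ext_class_K \<alpha>"
    and rcbf: "\<forall>x\<in>C. (SUP u\<in>U. ereal (INF th\<in>\<Theta>.
                 Lf gradh f x + Lg gradh g x \<bullet> u + Lphi gradh F G x u \<bullet> th))
               \<ge> ereal (- \<alpha> (h x))"
    and K_nonempty: "\<forall>x\<in>C. {u\<in>U. Lf gradh f x + Lg gradh g x \<bullet> u
                      + (INF th\<in>\<Theta>. Lphi gradh F G x u \<bullet> th) \<ge> - \<alpha> (h x)} \<noteq> {}"
    and kd_lip: "locally_lipschitz kd"
    and k_lip: "locally_lipschitz k"
    and k_qp: "\<forall>x. \<exists>\<mu>. qp_solution U A b h gradh \<alpha> f g F G kd x (k x) \<mu>"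
  shows "forward_invariant (\<lambda>x. f x + g x *v k x + regressor F G x (k x) *v \<theta>) C"
  unfolding C_def
proof (rule forward_invariant_superlevel_set[OF h_deriv])
  show "strict_mono \<alpha>" "\<alpha> 0 = 0"
    using alpha_K unfolding ext_class_K_def by auto
  have "\<forall>i. (A *v \<theta>) $ i \<le> b $ i"
    using theta_in halfspace by blast
  then show "gradh x \<bullet> (f x + g x *v k x + regressor F G x (k x) *v \<theta>) \<ge> - \<alpha> (h x)" for x
  proof -
    obtain \<mu> where "qp_solution U A b h gradh \<alpha> f g F G kd x (k x) \<mu>"
      using k_qp by blast
    then show ?thesis
      using qp_feasible_imp_cbf_condition \<open>\<forall>i. (A *v \<theta>) $ i \<le> b $ i\<close>
      unfolding qp_solution_def by blast
  qed
qed

end
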